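(* Assume $f$ has a unique global maximizer $g$ and the problem contains no weak epistasis. Let $v_0,v_1,\dots,v_{\ell-1}$ be an enumeration of $V$ in topological order of the epistatic graph, i.e. $\{v_j\}\not\Rightarrow v_i$ whenever $i<j$ (so the epistatic graph is acyclic). Then Partial Enumeration run on the partition $D=(\{v_0\},\{v_1\},\dots,\{v_{\ell-1}\})$, from any initial chromosome, ends with allele $g[v_i]$ at locus $v_i$ for every $i$; i.e. it returns the global optimum, using $2\ell$ fitness evaluations.
   Context: Fix $\ell\ge1$, loci $V=\{0,\dots,\ell-1\}$, chromosomes $\vec y\in\{0,1\}^V$, fitness $f:\{0,1\}^V\to\mathbb R$ (maximized) with unique global maximizer $g$. An assignment $A$ is a set of pairs $(v,a)$ ($v\in V$, $a\in\{0,1\}$) with at most one pair per locus; coverage $\mathcal C(A)$ is the set of loci in $A$; $\vec y^A$ denotes $\vec y$ with the alleles at loci of $\mathcal C(A)$ overwritten by $A$. $\Psi_A$ (constrained optima) is the set of chromosomes agreeing with $A$ on $\mathcal C(A)$ with maximum fitness among such chromosomes; $\Psi_A[v]=\{\psi_v:\psi\in\Psi_A\}$. Epistasis: for $v\in V$ and nonempty $S\subseteq V\setminus\{v\}$, $S\Rightarrow v$ iff for every $s\in S$ there exists an assignment $A$ with $\mathcal C(A)=S$ and $\Psi_A[v]\neq\Psi_{A\setminus\{(s,A[s])\}}[v]$ (where $A[s]$ is the allele of $A$ at $s$); the empty set is never epistatic. An epistasis $S\Rightarrow v$ with $|S|\ge2$ is weak if no nonempty proper subset $T\subsetneq S$ has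 $T\Rightarrow v$; "no weak epistasis" means no epistasis is weak. The epistatic graph is the directed graph on $V$ with edge $u\to v$ iff $\{u\}\Rightarrow v$. Partial Enumeration (PE) takes an ordered partition $D=(d_0,\dots,d_{m-1})$ of $V$, starts from an arbitrary (random) chromosome $\vec y$, and for $i=0,\dots,m-1$ in turn, for each of the $2^{|d_i|}$ assignments $A$ with $\mathcal C(A)=d_i$ (in any order), replaces $\vec y$ by $\vec y^A$ whenever $f(\vec y^A)>f(\vec y)$; it returns the final $\vec y$. *)

theory Defs
  imports Complex_Main
begin

text \<open>Loci are the elements of a finite type 'v (playing the role of V = {0..l-1}, l = CARD('v) >= 1);
  chromosomes are maps 'v => bool; assignments are partial maps 'v => bool option
  (at most one allele per locus), with coverage dom A.\<close>

type_synonym 'v chrom = "'v \<Rightarrow> bool"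
type_synonym 'v assignment = "'v \<Rightarrow> bool option"

definition apply_asg :: "'v chrom \<Rightarrow> 'v assignment \<Rightarrow> 'v chrom" where
  "apply_asg y A = (\<lambda>v. case A v of None \<Rightarrow> y v | Some a \<Rightarrow> a)"

definition agrees :: "'v chrom \<Rightarrow> 'v assignment \<Rightarrow> bool" where
  "agrees y A \<longleftrightarrow> (\<forall>v a. A v = Some a \<longrightarrow> y v = a)"

definition Psi :: "('v chrom \<Rightarrow> real) \<Rightarrow> 'v assignment \<Rightarrow> 'v chrom set" where
  "Psi f A = {\<psi>. agrees \<psi> A \<and> (\<forall>\<phi>. agrees \<phi> A \<longrightarrow> f \<phi> \<le> f \<psi>)}"

definition Psi_at :: "('v chrom \<Rightarrow> real) \<Rightarrow> 'v assignment \<Rightarrow> 'v \<Rightarrow> bool set" where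
  "Psi_at f A v = (\<lambda>\<psi>. \<psi> v) ` Psi f A"

definition epistatic :: "('v chrom \<Rightarrow> real) \<Rightarrow> 'v set \<Rightarrow> 'v \<Rightarrow> bool" where
  "epistatic f S v \<longleftrightarrow> S \<noteq> {} \<and> v \<notin> S \<and>
     (\<forall>s\<in>S. \<exists>A. dom A = S \<and> Psi_at f A v \<noteq> Psi_at f (A(s := None)) v)"

definition weak_epistasis :: "('v chrom \<Rightarrow> real) \<Rightarrow> 'v set \<Rightarrow> 'v \<Rightarrow> bool" where
  "weak_epistasis f S v \<longleftrightarrow> card S \<ge> 2 \<and> epistatic f S v \<and>
     \<not> (\<exists>T. T \<noteq> {} \<and> T \<subset> S \<and> epistatic f T v)"

definition no_weak_epistasis :: "('v::finite chrom \<Rightarrow> real) \<Rightarrow> bool" where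
  "no_weak_epistasis f \<longleftrightarrow> (\<forall>S v. \<not> weak_epistasis f S v)"

definition unique_global_max :: "('v chrom \<Rightarrow> real) \<Rightarrow> 'v chrom \<Rightarrow> bool" where
  "unique_global_max f g \<longleftrightarrow> (\<forall>y. y \<noteq> g \<longrightarrow> f y < f g)"

text \<open>For each block d_i of the ordered partition, the assignments with
  coverage d_i are tried in some order, given as a list. The state is the current chromosome
  together with the number of fitness evaluations f(y^A) performed so far.\<close>

definition pe_step :: "('v chrom \<Rightarrow> real) \<Rightarrow> 'v assignment \<Rightarrow> 'v chrom \<times> nat \<Rightarrow> 'v chrom \<times> nat" where
  "pe_step f A st = (let y = fst st; y' = apply_asg y A in
      (if f y' > f y then y' else y, Suc (snd st)))"

definition pe_run :: "('v chrom \<Rightarrow> real) \<Rightarrow> 'v assignment list list \<Rightarrow> 'v chrom \<Rightarrow> 'v chrom \<times> nat" where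
  "pe_run f orders y = fold (\<lambda>As st. fold (pe_step f) As st) orders (y, 0)"

definition valid_orders :: "'v set list \<Rightarrow> 'v assignment list list \<Rightarrow> bool" where
  "valid_orders D orders \<longleftrightarrow> length orders = length D \<and>
     (\<forall>i<length D. distinct (orders ! i) \<and> set (orders ! i) = {A. dom A = D ! i})"

end

theory Submission
  imports Defs
begin

text \<open>Because there is no weak epistasis, a locus v whose allele is not influenced by any single
  later locus is not influenced by any set of later loci either. Hence fixing the later loci in
  any way leaves the constrained optima at v equal to the unconstrained one, g v. By induction
  along the topological order, once the earlier loci carry their optimal alleles, setting v to
  g v is strictly better than setting it to the opposite allele, whatever the later loci are.
  So each singleton block of Partial Enumeration installs the optimal allele and never loses
  one installed earlier.\<close>

lemma no_weak_epistasis_not_epistatic_subset: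
  fixes f :: "('v::finite) chrom \<Rightarrow> real"
  assumes no_weak: "no_weak_epistasis f"
    and singletons: "\<forall>u\<in>U. \<not> epistatic f {u} v"
    and "T \<subseteq> U"
  shows "\<not> epistatic f T v"
  using \<open>T \<subseteq> U\<close>
proof (induction "card T" arbitrary: T rule: less_induct)
  case less
  show ?case
  proof
    assume epi: "epistatic f T v"
    then have "T \<noteq> {}" by (simp add: epistatic_def)
    show False
    proof (cases "card T \<ge> 2")
      case True
      moreover have "\<not> weak_epistasis f T v"
        using no_weak by (simp add: no_weak_epistasis_def)
      ultimately obtain T' where "T' \<noteq> {}" "T' \<subset> T" "epistatic f T' v"
        using epi by (auto simp: weak_epistasis_def)
      moreover have "card T' < card T" using \<open>T' \<subset> T\<close> by (simp add: psubset_card_mono)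
      ultimately show False using less by blast
    next
      case False
      moreover have "card T \<noteq> 0" using \<open>T \<noteq> {}\<close> by simp
      ultimately have "card T = 1" by linarith
      then obtain u where "T = {u}" by (auto simp: card_Suc_eq)
      with less.prems singletons epi show False by auto
    qed
  qed
qed

lemma Psi_at_eq_Psi_at_empty:
  fixes f :: "('v::finite) chrom \<Rightarrow> real"
  assumes not_epi: "\<forall>T\<subseteq>U. \<not> epistatic f T v" and "v \<notin> U" and "dom A \<subseteq> U"
  shows "Psi_at f A v = Psi_at f Map.empty v"
  using \<open>dom A \<subseteq> U\<close>
proof (induction "card (dom A)" arbitrary: A rule: less_induct)
  case less
  show ?case
  proof (cases "dom A = {}")
    case True
    then show ?thesis by simp
  next
    case False
    moreover have "\<not> epistatic f (dom A) v" using not_epi less.prems by blast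
    ultimately obtain s where "s \<in> dom A"
      and drop_s: "\<forall>A'. dom A' = dom A \<longrightarrow> Psi_at f A' v = Psi_at f (A'(s := None)) v"
      using \<open>v \<notin> U\<close> less.prems unfolding epistatic_def by blast
    have "card (dom (A(s := None))) < card (dom A)"
      using card_Diff1_less[OF finite \<open>s \<in> dom A\<close>] by simp
    moreover have "dom (A(s := None)) \<subseteq> U" using less.prems by auto
    ultimately have "Psi_at f (A(s := None)) v = Psi_at f Map.empty v" using less by blast
    with drop_s show ?thesis by simp
  qed
qed

lemma Psi_empty_eq_global_max:
  assumes "unique_global_max f g"
  shows "Psi f Map.empty = {g}"
proof -
  have "(\<forall>\<phi>. f \<phi> \<le> f \<psi>) \<longleftrightarrow> \<psi> = g" for \<psi>
    using assms unfolding unique_global_max_def by (metis less_le_not_le nle_le)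
  then show ?thesis by (auto simp: Psi_def agrees_def)
qed

lemma Psi_nonempty:
  fixes f :: "('v::finite) chrom \<Rightarrow> real"
  shows "Psi f A \<noteq> {}"
proof -
  let ?X = "{\<phi>. agrees \<phi> A}"
  have "apply_asg (\<lambda>_. False) A \<in> ?X"
    by (simp add: agrees_def apply_asg_def)
  then have "Max (f ` ?X) \<in> f ` ?X" by (intro Max_in) auto
  then obtain \<psi> where "\<psi> \<in> ?X" "f \<psi> = Max (f ` ?X)" by auto
  then have "\<psi> \<in> Psi f A" by (auto simp: Psi_def)
  then show ?thesis by blast
qed

lemma agrees_restrict_map_iff: "agrees \<phi> ((Some \<circ> y) |` L) \<longleftrightarrow> (\<forall>u\<in>L. \<phi> u = y u)"
  by (auto simp: agrees_def restrict_map_def)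

lemma apply_asg_singleton: "apply_asg y [v \<mapsto> a] = y(v := a)"
  by (auto simp: apply_asg_def)

lemma fold_pe_step_singleton_block:
  assumes "distinct As" and "set As = {A. dom A = {v}}"
    and better: "f (y(v := \<not> a)) < f (y(v := a))"
  shows "fold (pe_step f) As (y, n) = (y(v := a), n + 2)"
proof -
  have singletons: "{A. dom A = {v}} = {[v \<mapsto> True], [v \<mapsto> False]}"
  proof (intro set_eqI iffI)
    fix A :: "'a assignment"
    assume "A \<in> {A. dom A = {v}}"
    then obtain b where "A = [v \<mapsto> b]" by (auto simp: dom_eq_singleton_conv)
    then show "A \<in> {[v \<mapsto> True], [v \<mapsto> False]}" by (cases b) auto
  qed (auto split: if_splits)
  have "length As = 2" using assms singletons distinct_card[of As] by (simp add: fun_eq_iff)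
  then obtain A1 A2 where As: "As = [A1, A2]"
    by (auto simp: numeral_2_eq_2 length_Suc_conv)
  have "{A1, A2} = {[v \<mapsto> a], [v \<mapsto> \<not> a]}"
    using assms(2) singletons As by (cases a) auto
  then have orders: "A1 = [v \<mapsto> a] \<and> A2 = [v \<mapsto> \<not> a] \<or> A1 = [v \<mapsto> \<not> a] \<and> A2 = [v \<mapsto> a]"
    by (auto simp: doubleton_eq_iff)
  have step: "pe_step f [v \<mapsto> b] (y', m) = (if f (y'(v := b)) > f y' then y'(v := b) else y', Suc m)"
    for y' b m by (simp add: pe_step_def apply_asg_singleton)
  consider "y(v := a) = y" | "y(v := \<not> a) = y"
    using fun_upd_idem_iff[of y v] by (cases "y v = a") auto
  then show ?thesis
  proof cases
    case 1
    with better have "\<not> f y < f (y(v := \<not> a))" by simp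
    with orders 1 show ?thesis unfolding As by (elim disjE conjE) (simp_all add: step)
  next
    case 2
    with better have "f y < f (y(v := a))" by simp
    with orders 2 show ?thesis unfolding As by (elim disjE conjE) (simp_all add: step)
  qed
qed

lemma nth_mem_set_take_iff:
  "distinct xs \<Longrightarrow> k < length xs \<Longrightarrow> xs ! k \<in> set (take i xs) \<longleftrightarrow> k < i"
  by (auto simp: in_set_conv_nth nth_eq_iff_index_eq)

lemma nth_mem_set_drop_iff:
  assumes "distinct xs" and "k < length xs"
  shows "xs ! k \<in> set (drop i xs) \<longleftrightarrow> i \<le> k"
proof -
  have "set (take i xs) \<inter> set (drop i xs) = {}"
    using set_take_disj_set_drop_if_distinct[OF assms(1) order_refl] .
  moreover have "xs ! k \<in> set (take i xs) \<union> set (drop i xs)"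
    using assms(2) by (metis append_take_drop_id nth_mem set_append)
  ultimately show ?thesis using nth_mem_set_take_iff[OF assms, of i] by auto
qed

locale epistatic_topological_order =
  fixes f :: "('v::finite) chrom \<Rightarrow> real" and g :: "'v chrom" and vs :: "'v list"
  assumes unique_max: "unique_global_max f g"
    and no_weak: "no_weak_epistasis f"
    and distinct_vs: "distinct vs" and set_vs: "set vs = UNIV"
    and topological: "\<forall>i j. i < j \<and> j < length vs \<longrightarrow> \<not> epistatic f {vs ! j} (vs ! i)"
begin

lemma obtain_index:
  obtains j where "j < length vs" and "u = vs ! j"
  using set_vs by (metis UNIV_I in_set_conv_nth)

lemma Psi_at_fixing_later_loci:
  assumes "i < length vs" and "dom A \<subseteq> set (drop (Suc i) vs)"
  shows "Psi_at f A (vs ! i) = {g (vs ! i)}"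
proof -
  have "\<forall>u\<in>set (drop (Suc i) vs). \<not> epistatic f {u} (vs ! i)"
  proof
    fix u
    assume "u \<in> set (drop (Suc i) vs)"
    moreover obtain j where "j < length vs" "u = vs ! j" by (rule obtain_index)
    ultimately have "i < j" using distinct_vs by (simp add: nth_mem_set_drop_iff)
    with \<open>j < length vs\<close> \<open>u = vs ! j\<close> show "\<not> epistatic f {u} (vs ! i)"
      using topological by blast
  qed
  then have "\<forall>T\<subseteq>set (drop (Suc i) vs). \<not> epistatic f T (vs ! i)"
    using no_weak_epistasis_not_epistatic_subset[OF no_weak] by blast
  moreover have "vs ! i \<notin> set (drop (Suc i) vs)"
    using assms(1) distinct_vs by (simp add: nth_mem_set_drop_iff)
  ultimately have "Psi_at f A (vs ! i) = Psi_at f Map.empty (vs ! i)"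
    by (rule Psi_at_eq_Psi_at_empty[OF _ _ assms(2)])
  then show ?thesis by (simp add: Psi_at_def Psi_empty_eq_global_max[OF unique_max])
qed

lemma optimal_allele_strictly_better:
  assumes "i < length vs" and "\<forall>j<i. y (vs ! j) = g (vs ! j)"
  shows "f (y(vs ! i := \<not> g (vs ! i))) < f (y(vs ! i := g (vs ! i)))"
  using assms
proof (induction i arbitrary: y rule: less_induct)
  case (less i)
  define L where "L = set (drop (Suc i) vs)"
  define B where "B = (Some \<circ> y) |` L"
  have not_later: "vs ! k \<notin> L" if "k \<le> i" for k
    using that less.prems(1) distinct_vs by (simp add: L_def nth_mem_set_drop_iff)
  obtain z where z: "z \<in> Psi f B" using Psi_nonempty by blast
  then have z_agrees: "\<forall>u\<in>L. z u = y u" and z_max: "\<forall>\<phi>. agrees \<phi> B \<longrightarrow> f \<phi> \<le> f z"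
    by (auto simp: Psi_def B_def agrees_restrict_map_iff)
  have "Psi_at f B (vs ! i) = {g (vs ! i)}"
    using Psi_at_fixing_later_loci less.prems(1) by (simp add: B_def L_def)
  then have z_at_i: "z (vs ! i) = g (vs ! i)" using z by (auto simp: Psi_at_def)
  have z_earlier: "\<forall>j<i. z (vs ! j) = g (vs ! j)"
    \<comment> \<open>correcting the first wrong earlier allele of z would be a strict gain by induction\<close>
  proof (rule ccontr)
    assume "\<not> ?thesis"
    then obtain j where "j < i" "z (vs ! j) \<noteq> g (vs ! j)"
      and "\<forall>j'<j. \<not> (j' < i \<and> z (vs ! j') \<noteq> g (vs ! j'))"
      using exists_least_iff[of "\<lambda>j. j < i \<and> z (vs ! j) \<noteq> g (vs ! j)"] by blast
    then have below_j: "\<forall>j'<j. z (vs ! j') = g (vs ! j')" by auto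
    have "j < length vs" using \<open>j < i\<close> less.prems(1) by simp
    from less.IH[OF \<open>j < i\<close> this below_j]
    have "f (z(vs ! j := \<not> g (vs ! j))) < f (z(vs ! j := g (vs ! j)))" .
    moreover have "z(vs ! j := \<not> g (vs ! j)) = z"
      using \<open>z (vs ! j) \<noteq> g (vs ! j)\<close> by (simp add: fun_upd_idem)
    ultimately have "f z < f (z(vs ! j := g (vs ! j)))" by (simp only:)
    moreover have "agrees (z(vs ! j := g (vs ! j))) B"
      using z_agrees not_later[of j] \<open>j < i\<close> by (auto simp: B_def agrees_restrict_map_iff)
    ultimately show False using z_max by (meson not_le)
  qed
  have z_eq: "z = y(vs ! i := g (vs ! i))"
  proof
    fix u
    obtain k where k: "k < length vs" "u = vs ! k" by (rule obtain_index)
    consider "k < i" | "k = i" | "i < k" by linarith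
    then show "z u = (y(vs ! i := g (vs ! i))) u"
    proof cases
      case 1
      then have "vs ! k \<noteq> vs ! i"
        using k(1) less.prems(1) distinct_vs by (simp add: nth_eq_iff_index_eq)
      with 1 k z_earlier less.prems(2) show ?thesis by simp
    next
      case 2
      then show ?thesis using k z_at_i by simp
    next
      case 3
      then have "u \<in> L" using k distinct_vs by (simp add: L_def nth_mem_set_drop_iff)
      moreover have "u \<noteq> vs ! i" using \<open>u \<in> L\<close> not_later[OF order_refl] by blast
      ultimately show ?thesis using z_agrees by simp
    qed
  qed
  define w where "w = y(vs ! i := \<not> g (vs ! i))"
  have "agrees w B"
    using not_later[OF order_refl] by (auto simp: w_def B_def agrees_restrict_map_iff)
  then have "f w \<le> f z" using z_max by blast
  moreover have "w \<notin> Psi f B"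
  proof
    assume "w \<in> Psi f B"
    then have "w (vs ! i) \<in> Psi_at f B (vs ! i)" by (simp add: Psi_at_def)
    with \<open>Psi_at f B (vs ! i) = {g (vs ! i)}\<close> show False by (simp add: w_def)
  qed
  then have "f w \<noteq> f z" using \<open>agrees w B\<close> z_max by (auto simp: Psi_def)
  ultimately have "f w < f z" by simp
  then show ?case by (simp only: w_def z_eq)
qed

lemma pe_prefix_eq_override_on:
  assumes orders: "valid_orders (map (\<lambda>v. {v}) vs) orders" and "k \<le> length vs"
  shows "fold (\<lambda>As st. fold (pe_step f) As st) (take k orders) (y, 0)
           = (override_on y g (set (take k vs)), 2 * k)"
  using \<open>k \<le> length vs\<close>
proof (induction k)
  case 0
  then show ?case by simp
next
  case (Suc k)
  then have "k < length vs" by simp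
  let ?y = "override_on y g (set (take k vs))"
  have block: "distinct (orders ! k)" "set (orders ! k) = {A. dom A = {vs ! k}}"
    using orders \<open>k < length vs\<close> by (auto simp: valid_orders_def)
  have "\<forall>j<k. ?y (vs ! j) = g (vs ! j)"
    using \<open>k < length vs\<close> distinct_vs by (simp add: override_on_def nth_mem_set_take_iff)
  then have "f (?y(vs ! k := \<not> g (vs ! k))) < f (?y(vs ! k := g (vs ! k)))"
    using optimal_allele_strictly_better \<open>k < length vs\<close> by blast
  then have block_result:
      "fold (pe_step f) (orders ! k) (?y, 2 * k) = (?y(vs ! k := g (vs ! k)), 2 * Suc k)"
    using fold_pe_step_singleton_block[OF block] by simp
  have "take (Suc k) orders = take k orders @ [orders ! k]"
    using orders \<open>k < length vs\<close> by (simp add: valid_orders_def take_Suc_conv_app_nth)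
  then have "fold (\<lambda>As st. fold (pe_step f) As st) (take (Suc k) orders) (y, 0)
      = fold (pe_step f) (orders ! k) (?y, 2 * k)"
    using Suc by simp
  also have "\<dots> = (override_on y g (insert (vs ! k) (set (take k vs))), 2 * Suc k)"
    by (simp only: block_result override_on_insert)
  also have "insert (vs ! k) (set (take k vs)) = set (take (Suc k) vs)"
    using \<open>k < length vs\<close> by (simp add: take_Suc_conv_app_nth)
  finally show ?case .
qed

end

theorem theorem2:
  fixes f :: "('v::finite) chrom \<Rightarrow> real" and g :: "'v chrom" and vs :: "'v list"
  assumes "unique_global_max f g"
    and "no_weak_epistasis f"
    and "distinct vs" and "set vs = UNIV"
    and "\<forall>i j. i < j \<and> j < length vs \<longrightarrow> \<not> epistatic f {vs ! j} (vs ! i)"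
  shows "\<forall>y orders. valid_orders (map (\<lambda>v. {v}) vs) orders \<longrightarrow>
           (\<forall>i < length vs. fst (pe_run f orders y) (vs ! i) = g (vs ! i))
           \<and> snd (pe_run f orders y) = 2 * length vs"
proof (intro allI impI)
  interpret epistatic_topological_order f g vs
    using assms by unfold_locales
  fix y orders
  assume orders: "valid_orders (map (\<lambda>v. {v}) vs) orders"
  then have "length orders = length vs" by (simp add: valid_orders_def)
  then have "pe_run f orders y = (override_on y g (set vs), 2 * length vs)"
    using pe_prefix_eq_override_on[OF orders, of "length vs" y] by (simp add: pe_run_def)
  then show "(\<forall>i < length vs. fst (pe_run f orders y) (vs ! i) = g (vs ! i))
           \<and> snd (pe_run f orders y) = 2 * length vs"
    by (simp add: override_on_def)
qed

end
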